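(* Consider the setting and definitions in the context. Then $V_{con}-V_{adj}$ is positive semidefinite.
   Context: For each $n$, let $N_n=\{1,\dots,n\}$ and let $\{Y_{n,i}:i\in N_n\}$, $Y_{n,i}\in\mathbb{R}^v$, be random vectors with finite second moments (means may differ across $i$). Each $i$ has a cluster index $g(i)\in\{1,\dots,G\}$ and a time index $t(i)\in\{1,\dots,T\}$. Let $N_t^T=\{i:t(i)=t\}$, $N_g^G=\{i:g(i)=g\}$, $N_{t,g}^{T\cap G}=N_t^T\cap N_g^G$, and $y_t:=\sum_{i\in N_t^T}Y_{n,i}$. Let $M$ be a positive integer and $\omega(m,M)\in[0,1]$ kernel weights. Define $V_{con}:=\sum_{i\in N_n}\sum_{j\in N^G_{g(i)}}E[Y_{n,i}Y_{n,j}']+\sum_{i\in N_n}\sum_{j\in N^T_{t(i)}}E[Y_{n,i}Y_{n,j}']+\sum_{m=1}^M\omega(m,M)\left(\sum_{t=1}^{T-m}E[y_ty_{t+m}']+\sum_{t=1}^{T-m}E[y_{t+m}y_t']+2\sum_{t=1}^TE[y_ty_t']\right)$, $V_{adj}:=\sum_{i\in N_n}\sum_{j\in N^G_{g(i)}}\mathrm{Cov}(Y_{n,i},Y_{n,j})+\sum_{i\in N_n}\sum_{j\in N^T_{t(i)}}\mathrm{Cov}(Y_{n,i},Y_{n,j})-\sum_{i\in N_n}\sum_{j\in N^{T\cap G}_{t(i),g(i)}}\mathrm{Cov}(Y_{n,i},Y_{n,j})+\sum_{m=1}^M\sum_{t=1}^{T-m}\omega(m,M)\mathrm{Cov}(y_t,y_{t+m})+\sum_{m=1}^M\sum_{t=1}^{T-m}\omega(m,M)\mathrm{Cov}(y_{t+m},y_t)$,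 where $\mathrm{Cov}(X,Z)=E[XZ']-E[X]E[Z]'$. *)

theory Defs
  imports "HOL-Probability.Probability"
begin

definition Emat :: "'a measure \<Rightarrow> ('a \<Rightarrow> real^'v) \<Rightarrow> ('a \<Rightarrow> real^'v) \<Rightarrow> real^'v^'v" where
  "Emat M X Z = (\<chi> a b. integral\<^sup>L M (\<lambda>w. X w $ a * Z w $ b))"

definition Evec :: "'a measure \<Rightarrow> ('a \<Rightarrow> real^'v) \<Rightarrow> real^'v" where
  "Evec M X = (\<chi> a. integral\<^sup>L M (\<lambda>w. X w $ a))"

definition Covm :: "'a measure \<Rightarrow> ('a \<Rightarrow> real^'v) \<Rightarrow> ('a \<Rightarrow> real^'v) \<Rightarrow> real^'v^'v" where
  "Covm M X Z = Emat M X Z - (\<chi> a b. Evec M X $ a * Evec M Z $ b)"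

definition psd :: "real^'v^'v \<Rightarrow> bool" where
  "psd A \<longleftrightarrow> (\<forall>x. 0 \<le> x \<bullet> (A *v x))"

definition yagg :: "nat \<Rightarrow> (nat \<Rightarrow> nat) \<Rightarrow> (nat \<Rightarrow> 'a \<Rightarrow> real^'v) \<Rightarrow> nat \<Rightarrow> 'a \<Rightarrow> real^'v" where
  "yagg n tt Y s = (\<lambda>w. \<Sum>i\<in>{i\<in>{1..n}. tt i = s}. Y i w)"

definition Vcon :: "'a measure \<Rightarrow> nat \<Rightarrow> (nat \<Rightarrow> nat) \<Rightarrow> (nat \<Rightarrow> nat) \<Rightarrow> nat \<Rightarrow> nat
    \<Rightarrow> (nat \<Rightarrow> real) \<Rightarrow> (nat \<Rightarrow> 'a \<Rightarrow> real^'v) \<Rightarrow> real^'v^'v" where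
  "Vcon M n g tt T Mk wt Y =
     (\<Sum>i\<in>{1..n}. \<Sum>j\<in>{j\<in>{1..n}. g j = g i}. Emat M (Y i) (Y j))
   + (\<Sum>i\<in>{1..n}. \<Sum>j\<in>{j\<in>{1..n}. tt j = tt i}. Emat M (Y i) (Y j))
   + (\<Sum>m\<in>{1..Mk}. wt m *\<^sub>R
        ((\<Sum>s\<in>{1..T-m}. Emat M (yagg n tt Y s) (yagg n tt Y (s+m)))
       + (\<Sum>s\<in>{1..T-m}. Emat M (yagg n tt Y (s+m)) (yagg n tt Y s))
       + 2 *\<^sub>R (\<Sum>s\<in>{1..T}. Emat M (yagg n tt Y s) (yagg n tt Y s))))"

definition Vadj :: "'a measure \<Rightarrow> nat \<Rightarrow> (nat \<Rightarrow> nat) \<Rightarrow> (nat \<Rightarrow> nat) \<Rightarrow> nat \<Rightarrow> nat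
    \<Rightarrow> (nat \<Rightarrow> real) \<Rightarrow> (nat \<Rightarrow> 'a \<Rightarrow> real^'v) \<Rightarrow> real^'v^'v" where
  "Vadj M n g tt T Mk wt Y =
     (\<Sum>i\<in>{1..n}. \<Sum>j\<in>{j\<in>{1..n}. g j = g i}. Covm M (Y i) (Y j))
   + (\<Sum>i\<in>{1..n}. \<Sum>j\<in>{j\<in>{1..n}. tt j = tt i}. Covm M (Y i) (Y j))
   - (\<Sum>i\<in>{1..n}. \<Sum>j\<in>{j\<in>{1..n}. tt j = tt i \<and> g j = g i}. Covm M (Y i) (Y j))
   + (\<Sum>m\<in>{1..Mk}. \<Sum>s\<in>{1..T-m}. wt m *\<^sub>R Covm M (yagg n tt Y s) (yagg n tt Y (s+m)))
   + (\<Sum>m\<in>{1..Mk}. \<Sum>s\<in>{1..T-m}. wt m *\<^sub>R Covm M (yagg n tt Y (s+m)) (yagg n tt Y s))"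

end

theory Submission
  imports Defs
begin

(* Evaluate the quadratic forms at x and put u_i = x'Y_i, v_t = x'y_t.  Since
   E[XZ'] - Cov(X,Z) = E[X]E[Z]', the cluster and time terms of V_con - V_adj become
   sums over clusters resp. periods of (sum of E u_i)^2, and the subtracted intersection
   term adds the variances of the cell sums of the u_i.  For each lag m the remaining
   term is the lagged products of the means E v_t plus 2 sum_t E[v_t^2]; as
   E[v_t^2] >= (E v_t)^2, it dominates sum_t (E v_t + E v_(t+m))^2 >= 0. *)

definition square_integrable :: "'a measure \<Rightarrow> ('a \<Rightarrow> real) \<Rightarrow> bool" where
  "square_integrable M f \<longleftrightarrow> f \<in> borel_measurable M \<and> integrable M (\<lambda>w. (f w)\<^sup>2)"

lemma square_integrable_imp_integrable_mult:
  assumes "square_integrable M f" "square_integrable M g"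
  shows "integrable M (\<lambda>w. f w * g w)"
proof (rule Bochner_Integration.integrable_bound)
  show "integrable M (\<lambda>w. (f w)\<^sup>2 + (g w)\<^sup>2)" "(\<lambda>w. f w * g w) \<in> borel_measurable M"
    using assms unfolding square_integrable_def by auto
  have "\<bar>f w * g w\<bar> \<le> (f w)\<^sup>2 + (g w)\<^sup>2" for w
    unfolding abs_mult using sum_squares_bound[of "\<bar>f w\<bar>" "\<bar>g w\<bar>"]
      mult_nonneg_nonneg[OF abs_ge_zero abs_ge_zero, of "f w" "g w"]
    by (simp only: power2_abs)
  then show "AE w in M. norm (f w * g w) \<le> norm ((f w)\<^sup>2 + (g w)\<^sup>2)"
    by simp
qed

lemma square_integrable_add:
  assumes "square_integrable M f" "square_integrable M g"
  shows "square_integrable M (\<lambda>w. f w + g w)"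
proof -
  have "(\<lambda>w. (f w + g w)\<^sup>2) = (\<lambda>w. (f w)\<^sup>2 + (g w)\<^sup>2 + 2 * (f w * g w))"
    by (simp add: power2_sum mult.assoc)
  then show ?thesis
    using assms square_integrable_imp_integrable_mult[OF assms]
    unfolding square_integrable_def by auto
qed

lemma square_integrable_cmult:
  "square_integrable M f \<Longrightarrow> square_integrable M (\<lambda>w. c * f w)"
  unfolding square_integrable_def by (auto simp: power_mult_distrib)

lemma square_integrable_sum:
  "(\<And>i. i \<in> I \<Longrightarrow> square_integrable M (f i)) \<Longrightarrow> square_integrable M (\<lambda>w. \<Sum>i\<in>I. f i w)"
proof (induction I rule: infinite_finite_induct)
  case (insert i I)
  then show ?case
    using square_integrable_add[of M "f i" "\<lambda>w. \<Sum>i\<in>I. f i w"] by simp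
qed (simp_all add: square_integrable_def)

lemma square_integrable_inner:
  fixes X :: "'a \<Rightarrow> real^'n"
  assumes "\<And>a. square_integrable M (\<lambda>w. X w $ a)"
  shows "square_integrable M (\<lambda>w. x \<bullet> X w)"
  unfolding inner_vec_def by (simp add: square_integrable_sum square_integrable_cmult assms)

lemma sum_grouped_products_nonneg:
  fixes f :: "'i \<Rightarrow> real" and k :: "'i \<Rightarrow> 'c"
  assumes "finite S"
  shows "0 \<le> (\<Sum>i\<in>S. \<Sum>j\<in>{j\<in>S. k j = k i}. f i * f j)"
proof -
  define B where "B c = (\<Sum>j\<in>{j\<in>S. k j = c}. f j)" for c
  have "(\<Sum>i\<in>S. \<Sum>j\<in>{j\<in>S. k j = k i}. f i * f j) = (\<Sum>i\<in>S. f i * B (k i))"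
    unfolding B_def by (simp add: sum_distrib_left)
  also have "\<dots> = (\<Sum>c\<in>k ` S. \<Sum>i\<in>{i\<in>S. k i = c}. f i * B (k i))"
    by (rule sum.group[symmetric]) (use assms in auto)
  also have "\<dots> = (\<Sum>c\<in>k ` S. (B c)\<^sup>2)"
    unfolding B_def power2_eq_square by (auto simp: sum_distrib_right intro!: sum.cong)
  finally show ?thesis
    by (simp add: sum_nonneg)
qed

lemma (in prob_space) sum_grouped_covariances_nonneg:
  fixes U :: "'i \<Rightarrow> 'a \<Rightarrow> real" and k :: "'i \<Rightarrow> 'c"
  assumes "finite S" and U: "\<And>i. i \<in> S \<Longrightarrow> square_integrable M (U i)"
  shows "0 \<le> (\<Sum>i\<in>S. \<Sum>j\<in>{j\<in>S. k j = k i}.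
               expectation (\<lambda>w. U i w * U j w) - expectation (U i) * expectation (U j))"
proof -
  define V where "V i w = U i w - expectation (U i)" for i w
  have U_int: "integrable M (U i)" if "i \<in> S" for i
    using U[OF that] square_integrable_imp_integrable unfolding square_integrable_def by blast
  have UU_int: "integrable M (\<lambda>w. U i w * U j w)" if "i \<in> S" "j \<in> S" for i j
    using square_integrable_imp_integrable_mult U that by blast
  have VV_eq: "(\<lambda>w. V i w * V j w) = (\<lambda>w. U i w * U j w - expectation (U j) * U i w
      - expectation (U i) * U j w + expectation (U i) * expectation (U j))" for i j
    unfolding V_def by (auto simp: algebra_simps)
  have VV_int: "integrable M (\<lambda>w. V i w * V j w)" if "i \<in> S" "j \<in> S" for i j
    unfolding VV_eq using U_int UU_int that by simp
  have "(\<Sum>i\<in>S. \<Sum>j\<in>{j\<in>S. k j = k i}.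
          expectation (\<lambda>w. U i w * U j w) - expectation (U i) * expectation (U j))
      = (\<Sum>i\<in>S. \<Sum>j\<in>{j\<in>S. k j = k i}. expectation (\<lambda>w. V i w * V j w))"
    unfolding VV_eq using U_int UU_int by (intro sum.cong refl) (simp add: prob_space)
  also have "\<dots> = expectation (\<lambda>w. \<Sum>i\<in>S. \<Sum>j\<in>{j\<in>S. k j = k i}. V i w * V j w)"
    using VV_int by (subst Bochner_Integration.integral_sum)
      (auto simp: Bochner_Integration.integral_sum intro!: sum.cong)
  also have "\<dots> \<ge> 0"
    using \<open>finite S\<close> by (simp add: sum_grouped_products_nonneg)
  finally show ?thesis .
qed

definition quad_form :: "real^'n \<Rightarrow> real^'n^'n \<Rightarrow> real" where
  "quad_form x A = x \<bullet> (A *v x)"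

lemma psd_iff_quad_form: "psd A \<longleftrightarrow> (\<forall>x. 0 \<le> quad_form x A)"
  unfolding psd_def quad_form_def ..

lemma quad_form_expand: "quad_form x A = (\<Sum>a\<in>UNIV. \<Sum>b\<in>UNIV. x $ a * A $ a $ b * x $ b)"
  unfolding quad_form_def inner_vec_def matrix_vector_mult_def
  by (simp add: sum_distrib_left mult.assoc)

lemma quad_form_add [simp]: "quad_form x (A + B) = quad_form x A + quad_form x B"
  unfolding quad_form_expand by (simp add: algebra_simps sum.distrib)

lemma quad_form_diff [simp]: "quad_form x (A - B) = quad_form x A - quad_form x B"
  unfolding quad_form_expand by (simp add: algebra_simps sum_subtractf)

lemma quad_form_scaleR [simp]: "quad_form x (c *\<^sub>R A) = c * quad_form x A"
  unfolding quad_form_expand by (simp add: algebra_simps sum_distrib_left)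

lemma quad_form_zero [simp]: "quad_form x 0 = 0"
  by (simp add: quad_form_def)

lemma quad_form_sum [simp]: "quad_form x (\<Sum>i\<in>I. A i) = (\<Sum>i\<in>I. quad_form x (A i))"
  by (induction I rule: infinite_finite_induct) simp_all

lemma quad_form_Emat_minus_Covm:
  "quad_form x (Emat M X Z - Covm M X Z) = (x \<bullet> Evec M X) * (x \<bullet> Evec M Z)"
  unfolding Covm_def quad_form_expand inner_vec_def by (simp add: sum_product algebra_simps)

lemma inner_Evec:
  assumes "\<And>a. integrable M (\<lambda>w. X w $ a)"
  shows "x \<bullet> Evec M X = integral\<^sup>L M (\<lambda>w. x \<bullet> X w)"
  unfolding inner_vec_def Evec_def using assms by simp

lemma quad_form_Emat:
  assumes X: "\<And>a. square_integrable M (\<lambda>w. X w $ a)"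
    and Z: "\<And>a. square_integrable M (\<lambda>w. Z w $ a)"
  shows "quad_form x (Emat M X Z) = integral\<^sup>L M (\<lambda>w. (x \<bullet> X w) * (x \<bullet> Z w))"
proof -
  have "integrable M (\<lambda>w. x $ a * X w $ a * Z w $ b * x $ b)" for a b
    using integrable_mult_right[OF square_integrable_imp_integrable_mult[OF X Z], of "x $ a * x $ b"]
    by (simp add: algebra_simps)
  then have "quad_form x (Emat M X Z)
      = integral\<^sup>L M (\<lambda>w. \<Sum>a\<in>UNIV. \<Sum>b\<in>UNIV. x $ a * X w $ a * Z w $ b * x $ b)"
    unfolding quad_form_expand Emat_def by (simp add: algebra_simps)
  also have "\<dots> = integral\<^sup>L M (\<lambda>w. (x \<bullet> X w) * (x \<bullet> Z w))"
    unfolding inner_vec_def by (simp add: sum_product algebra_simps)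
  finally show ?thesis .
qed

lemma (in prob_space) quad_form_Covm:
  assumes X: "\<And>a. square_integrable M (\<lambda>w. X w $ a)"
    and Z: "\<And>a. square_integrable M (\<lambda>w. Z w $ a)"
  shows "quad_form x (Covm M X Z)
    = expectation (\<lambda>w. (x \<bullet> X w) * (x \<bullet> Z w))
      - expectation (\<lambda>w. x \<bullet> X w) * expectation (\<lambda>w. x \<bullet> Z w)"
proof -
  have "\<And>a. integrable M (\<lambda>w. X w $ a)" "\<And>a. integrable M (\<lambda>w. Z w $ a)"
    using X Z square_integrable_imp_integrable unfolding square_integrable_def by blast+
  then show ?thesis
    using quad_form_Emat_minus_Covm[of x M X Z] quad_form_Emat[OF X Z, of x]
    by (simp add: inner_Evec)
qed

lemma (in prob_space) psd_Covm_self: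
  assumes X: "\<And>a. square_integrable M (\<lambda>w. X w $ a)"
  shows "psd (Covm M X X)"
  unfolding psd_iff_quad_form
proof
  fix x
  define u where "u w = x \<bullet> X w" for w
  have u: "u \<in> borel_measurable M" "integrable M (\<lambda>w. (u w)\<^sup>2)"
    using square_integrable_inner[OF X] unfolding u_def square_integrable_def by auto
  have "quad_form x (Covm M X X) = expectation (\<lambda>w. (u w)\<^sup>2) - (expectation u)\<^sup>2"
    using quad_form_Covm[OF X X, of x] unfolding u_def by (simp add: power2_eq_square)
  also have "\<dots> = variance u"
    using variance_eq[OF square_integrable_imp_integrable[OF u] u(2)] by simp
  finally show "0 \<le> quad_form x (Covm M X X)"
    using variance_positive by simp
qed

lemma lagged_products_nonneg:
  fixes a :: "nat \<Rightarrow> real"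
  shows "0 \<le> (\<Sum>s\<in>{1..T-m}. a s * a (s+m)) + (\<Sum>s\<in>{1..T-m}. a (s+m) * a s)
              + 2 * (\<Sum>s\<in>{1..T}. (a s)\<^sup>2)"
proof -
  have "(\<Sum>s\<in>{1..T-m}. (a (s+m))\<^sup>2) = (\<Sum>s\<in>(\<lambda>s. s+m) ` {1..T-m}. (a s)\<^sup>2)"
    by (subst sum.reindex) (auto simp: inj_on_def)
  also have "\<dots> \<le> (\<Sum>s\<in>{1..T}. (a s)\<^sup>2)"
    by (intro sum_mono2) auto
  finally have shifted: "(\<Sum>s\<in>{1..T-m}. (a (s+m))\<^sup>2) \<le> (\<Sum>s\<in>{1..T}. (a s)\<^sup>2)" .
  have unshifted: "(\<Sum>s\<in>{1..T-m}. (a s)\<^sup>2) \<le> (\<Sum>s\<in>{1..T}. (a s)\<^sup>2)"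
    by (intro sum_mono2) auto
  have "0 \<le> (\<Sum>s\<in>{1..T-m}. (a s + a (s+m))\<^sup>2)"
    by (simp add: sum_nonneg)
  also have "\<dots> = (\<Sum>s\<in>{1..T-m}. a s * a (s+m)) + (\<Sum>s\<in>{1..T-m}. a (s+m) * a s)
      + (\<Sum>s\<in>{1..T-m}. (a s)\<^sup>2) + (\<Sum>s\<in>{1..T-m}. (a (s+m))\<^sup>2)"
    by (simp add: power2_sum sum.distrib sum_distrib_left algebra_simps)
  finally show ?thesis
    using shifted unshifted by linarith
qed

lemma quad_form_Vcon_minus_Vadj:
  fixes x :: "real^'v" and M :: "'a measure" and Y :: "nat \<Rightarrow> 'a \<Rightarrow> real^'v"
    and n :: nat and tt :: "nat \<Rightarrow> nat"
  defines "\<mu> \<equiv> \<lambda>i. x \<bullet> Evec M (Y i)" and "\<alpha> \<equiv> \<lambda>s. x \<bullet> Evec M (yagg n tt Y s)"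
  shows "quad_form x (Vcon M n g tt T Mk wt Y - Vadj M n g tt T Mk wt Y)
    = (\<Sum>i\<in>{1..n}. \<Sum>j\<in>{j\<in>{1..n}. g j = g i}. \<mu> i * \<mu> j)
    + (\<Sum>i\<in>{1..n}. \<Sum>j\<in>{j\<in>{1..n}. tt j = tt i}. \<mu> i * \<mu> j)
    + quad_form x (\<Sum>i\<in>{1..n}. \<Sum>j\<in>{j\<in>{1..n}. tt j = tt i \<and> g j = g i}. Covm M (Y i) (Y j))
    + (\<Sum>m\<in>{1..Mk}. wt m *
        ((\<Sum>s\<in>{1..T-m}. \<alpha> s * \<alpha> (s+m)) + (\<Sum>s\<in>{1..T-m}. \<alpha> (s+m) * \<alpha> s)
         + 2 * (\<Sum>s\<in>{1..T}. (\<alpha> s)\<^sup>2)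
         + 2 * (\<Sum>s\<in>{1..T}. quad_form x (Covm M (yagg n tt Y s) (yagg n tt Y s)))))"
proof -
  have Emat: "quad_form x (Emat M X Z) = quad_form x (Covm M X Z) + (x \<bullet> Evec M X) * (x \<bullet> Evec M Z)"
    for X Z :: "'a \<Rightarrow> real^'v"
    using quad_form_Emat_minus_Covm[of x M X Z] by simp
  show ?thesis
    unfolding Vcon_def Vadj_def \<mu>_def \<alpha>_def
    by (simp add: Emat sum.distrib sum_distrib_left algebra_simps power2_eq_square)
qed

theorem proposition1:
  fixes M :: "'a measure" and n G T Mk :: nat
    and g tt :: "nat \<Rightarrow> nat" and wt :: "nat \<Rightarrow> real"
    and Y :: "nat \<Rightarrow> 'a \<Rightarrow> real^'v"
  assumes "prob_space M"
    and "\<And>i. i \<in> {1..n} \<Longrightarrow> Y i \<in> borel_measurable M"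
    and "\<And>i k. i \<in> {1..n} \<Longrightarrow> integrable M (\<lambda>w. (Y i w $ k)^2)"
    and "\<And>i. i \<in> {1..n} \<Longrightarrow> g i \<in> {1..G}"
    and "\<And>i. i \<in> {1..n} \<Longrightarrow> tt i \<in> {1..T}"
    and "Mk \<ge> 1"
    and "\<And>m. m \<in> {1..Mk} \<Longrightarrow> 0 \<le> wt m \<and> wt m \<le> 1"
  shows "psd (Vcon M n g tt T Mk wt Y - Vadj M n g tt T Mk wt Y)"
  unfolding psd_iff_quad_form
proof
  fix x :: "real^'v"
  interpret prob_space M by fact
  define \<alpha> where "\<alpha> s = x \<bullet> Evec M (yagg n tt Y s)" for s
  have Y_sq: "square_integrable M (\<lambda>w. Y i w $ a)" if "i \<in> {1..n}" for i a
    unfolding square_integrable_def using assms(2,3)[OF that]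
    by (auto intro: measurable_compose[OF _ borel_measurable_nth])
  have y_sq: "square_integrable M (\<lambda>w. yagg n tt Y s w $ a)" for s a
    unfolding yagg_def sum_component by (intro square_integrable_sum Y_sq) auto
  have cells: "0 \<le> quad_form x
      (\<Sum>i\<in>{1..n}. \<Sum>j\<in>{j\<in>{1..n}. tt j = tt i \<and> g j = g i}. Covm M (Y i) (Y j))"
  proof -
    have "0 \<le> (\<Sum>i\<in>{1..n}. \<Sum>j\<in>{j\<in>{1..n}. (tt j, g j) = (tt i, g i)}.
        expectation (\<lambda>w. (x \<bullet> Y i w) * (x \<bullet> Y j w))
        - expectation (\<lambda>w. x \<bullet> Y i w) * expectation (\<lambda>w. x \<bullet> Y j w))"
      by (intro sum_grouped_covariances_nonneg square_integrable_inner Y_sq) auto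
    also have "\<dots> = quad_form x
        (\<Sum>i\<in>{1..n}. \<Sum>j\<in>{j\<in>{1..n}. tt j = tt i \<and> g j = g i}. Covm M (Y i) (Y j))"
      by (auto simp: quad_form_Covm Y_sq intro!: sum.cong)
    finally show ?thesis .
  qed
  have covs: "0 \<le> (\<Sum>s\<in>{1..T}. quad_form x (Covm M (yagg n tt Y s) (yagg n tt Y s)))"
    using psd_Covm_self[OF y_sq] by (auto simp: psd_iff_quad_form intro: sum_nonneg)
  have lags: "0 \<le> (\<Sum>s\<in>{1..T-m}. \<alpha> s * \<alpha> (s+m)) + (\<Sum>s\<in>{1..T-m}. \<alpha> (s+m) * \<alpha> s)
      + 2 * (\<Sum>s\<in>{1..T}. (\<alpha> s)\<^sup>2)
      + 2 * (\<Sum>s\<in>{1..T}. quad_form x (Covm M (yagg n tt Y s) (yagg n tt Y s)))" for m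
    using lagged_products_nonneg[of \<alpha> m T] covs by linarith
  show "0 \<le> quad_form x (Vcon M n g tt T Mk wt Y - Vadj M n g tt T Mk wt Y)"
    unfolding quad_form_Vcon_minus_Vadj \<alpha>_def[symmetric]
    \<comment> \<open>lags comes first so that add_nonneg_nonneg does not split the lag terms\<close>
    by (intro lags add_nonneg_nonneg sum_grouped_products_nonneg cells sum_nonneg mult_nonneg_nonneg)
      (simp_all add: assms(7))
qed

end
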